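(* A metrizable space $X$ satisfies $S_{fin}(\mathcal{K}_{\Omega},\mathcal{K}_{\Omega})$ if and only if $vet(Q_p(X,\mathbb{D}))=\omega$.
   Context: A function $f:X\to Y$ is quasicontinuous if for every $x\in X$, every open $V\ni f(x)$ and every open $U\ni x$ there is a nonempty open $W\subseteq U$ with $f(W)\subseteq V$. $Q_p(X,\mathbb{D})$ is the space of quasicontinuous functions from $X$ to the discrete space $\mathbb{D}=\{0,1\}$ with the topology of pointwise convergence. $\mathcal{K}_\Omega$ is the set of families $\mathcal{U}$ of open subsets of $X$ with $X=\bigcup\{\overline{U}:U\in\mathcal{U}\}$, no element of $\mathcal{U}$ dense in $X$, and for each finite $F\subseteq X$ some $U\in\mathcal{U}$ with $F\subseteq\overline{U}$. $S_{fin}(\mathcal{A},\mathcal{B})$: for every sequence $(A_n)_{n\in\mathbb{N}}$ of elements of $\mathcal{A}$ there are finite $B_n\subseteq A_n$ with $\bigcup_n B_n\in\mathcal{B}$. $vet(Z)=\omega$ means: for every $z\in Z$ and every sequence $(A_n)_{n\in\omega}$ of subsets of $Z$ with $z\in\bigcap_n\overline{A_n}$ there are finite $K_n\subseteq A_n$ with $z\in\overline{\bigcup_n K_n}$. *)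

theory Defs
  imports "HOL-Analysis.Analysis"
begin

definition quasicontinuous_map :: "'a topology \<Rightarrow> 'b topology \<Rightarrow> ('a \<Rightarrow> 'b) \<Rightarrow> bool" where
  "quasicontinuous_map X Y f \<longleftrightarrow>
     (\<forall>x\<in>topspace X. f x \<in> topspace Y) \<and>
     (\<forall>x\<in>topspace X. \<forall>V U. openin Y V \<and> f x \<in> V \<and> openin X U \<and> x \<in> U \<longrightarrow>
        (\<exists>W. openin X W \<and> W \<noteq> {} \<and> W \<subseteq> U \<and> f ` W \<subseteq> V))"

definition D2 :: "nat topology" where
  "D2 = discrete_topology {0, 1}"

text \<open>Q_p(X,D): quasicontinuous maps X -> D with the topology of pointwise convergence,
  i.e. the subspace of the product space D^X (functions extensional outside X).\<close>
definition Qp :: "'a topology \<Rightarrow> ('a \<Rightarrow> nat) topology" where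
  "Qp X = subtopology (product_topology (\<lambda>_. D2) (topspace X))
             {f. quasicontinuous_map X D2 f}"

definition K_Omega :: "'a topology \<Rightarrow> 'a set set set" where
  "K_Omega X = {\<U>. (\<forall>U\<in>\<U>. openin X U)
      \<and> topspace X = (\<Union>U\<in>\<U>. X closure_of U)
      \<and> (\<forall>U\<in>\<U>. X closure_of U \<noteq> topspace X)
      \<and> (\<forall>F. finite F \<and> F \<subseteq> topspace X \<longrightarrow> (\<exists>U\<in>\<U>. F \<subseteq> X closure_of U))}"

definition S_fin :: "'b set set \<Rightarrow> 'b set set \<Rightarrow> bool" where
  "S_fin \<A> \<B> \<longleftrightarrow> (\<forall>A :: nat \<Rightarrow> 'b set. (\<forall>n. A n \<in> \<A>) \<longrightarrow>
      (\<exists>B :: nat \<Rightarrow> 'b set. (\<forall>n. finite (B n) \<and> B n \<subseteq> A n) \<and> (\<Union>n. B n) \<in> \<B>))"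

definition vet_omega :: "'b topology \<Rightarrow> bool" where
  "vet_omega Z \<longleftrightarrow> (\<forall>z\<in>topspace Z. \<forall>A :: nat \<Rightarrow> 'b set.
      (\<forall>n. A n \<subseteq> topspace Z) \<and> (\<forall>n. z \<in> Z closure_of A n) \<longrightarrow>
      (\<exists>K :: nat \<Rightarrow> 'b set. (\<forall>n. finite (K n) \<and> K n \<subseteq> A n) \<and> z \<in> Z closure_of (\<Union>n. K n)))"

end

(*
  For open U let chi_U be the indicator function of the closure of U.  It is quasicontinuous,
  and the constant function 1 lies in the pointwise closure of {chi_U | U in U'} exactly when
  every finite set lies in the closure of some member of U'.  So vet = omega at the point 1 is
  literally S_fin(K_Omega, K_Omega); this half needs no metrizability.

  Conversely, let f lie in the closure of every A_n but in none of them.  By quasicontinuity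
  the points where f is not locally constant form a closed nowhere dense set B, and in a
  metrizable space B is the intersection of a decreasing sequence of open sets W_n.  If g in A_n
  agrees with f on a finite set F, there is a non-dense open U with F inside cl U such that on
  cl U the map g agrees with f except at points of W_n - B.  The metric input is that a point x
  in the closure of an open set P lies in the closure of an open U contained in P with cl U
  contained in P together with x.  These sets U form K_Omega covers.  Selecting from them with
  S_fin diagonally, so that every tail of the selection still contains a K_Omega cover, the
  witnesses g give finite K_n in A_n with f in the closure of their union, because every point
  outside B eventually leaves W_n.
*)

theory Submission
  imports Defs
begin

lemma topspace_D2 [simp]: "topspace D2 = {0,1}"
  by (simp add: D2_def)

lemma openin_D2 [simp]: "openin D2 V \<longleftrightarrow> V \<subseteq> {0,1}"
  by (simp add: D2_def)

lemma topspace_Qp: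
  "topspace (Qp X) = {f \<in> topspace X \<rightarrow>\<^sub>E {0,1}. quasicontinuous_map X D2 f}"
  by (auto simp: Qp_def)

lemma openin_product_discrete_topology_agreeing:
  assumes "finite F" "f \<in> I \<rightarrow>\<^sub>E T"
  shows "openin (product_topology (\<lambda>_. discrete_topology T) I) (\<Pi>\<^sub>E x\<in>I. if x \<in> F then {f x} else T)"
  unfolding openin_PiE_gen
  using assms by (auto simp: PiE_iff intro: finite_subset[of _ F])

lemma in_closure_of_product_discrete_topology:
  assumes S: "S \<subseteq> I \<rightarrow>\<^sub>E T" and f: "f \<in> I \<rightarrow>\<^sub>E T"
  shows "f \<in> product_topology (\<lambda>_. discrete_topology T) I closure_of S \<longleftrightarrow>
         (\<forall>F. finite F \<and> F \<subseteq> I \<longrightarrow> (\<exists>g\<in>S. \<forall>x\<in>F. g x = f x))"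
    (is "f \<in> ?P closure_of S \<longleftrightarrow> ?agree")
  unfolding in_closure_of
proof (intro iffI allI impI conjI)
  assume nbhds: "f \<in> topspace ?P \<and> (\<forall>N. f \<in> N \<and> openin ?P N \<longrightarrow> (\<exists>g. g \<in> S \<and> g \<in> N))"
  fix F assume F: "finite F \<and> F \<subseteq> I"
  let ?N = "\<Pi>\<^sub>E x\<in>I. if x \<in> F then {f x} else T"
  have "openin ?P ?N" "f \<in> ?N"
    using openin_product_discrete_topology_agreeing[of F f I T] F f by (auto simp: PiE_iff)
  then obtain g where g: "g \<in> S" "g \<in> ?N"
    using nbhds by blast
  moreover have "\<forall>x\<in>F. g x = f x"
    using PiE_mem[OF g(2)] F by fastforce
  ultimately show "\<exists>g\<in>S. \<forall>x\<in>F. g x = f x"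
    by blast
next
  show "f \<in> topspace ?P"
    using f by simp
  assume agree: ?agree
  fix N assume "f \<in> N \<and> openin ?P N"
  then obtain U where U: "finite {i \<in> I. U i \<noteq> T}" "f \<in> Pi\<^sub>E I U" "Pi\<^sub>E I U \<subseteq> N"
    unfolding openin_product_topology_alt by auto
  then obtain g where g: "g \<in> S" "\<forall>x \<in> {i \<in> I. U i \<noteq> T}. g x = f x"
    using agree by (metis (no_types, lifting) mem_Collect_eq subsetI)
  have gT: "g \<in> I \<rightarrow>\<^sub>E T"
    using g(1) S by blast
  have "g \<in> Pi\<^sub>E I U"
    unfolding PiE_iff
  proof (intro conjI ballI)
    fix i assume i: "i \<in> I"
    show "g i \<in> U i"
    proof (cases "U i = T")
      case True
      then show ?thesis using gT i by auto
    next
      case False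
      then show ?thesis using g(2) U(2) i by auto
    qed
  qed (use gT PiE_iff in blast)
  then show "\<exists>g. g \<in> S \<and> g \<in> N"
    using g U(3) by blast
qed

lemma in_closure_of_Qp:
  assumes S: "S \<subseteq> topspace (Qp X)" and f: "f \<in> topspace (Qp X)"
  shows "f \<in> Qp X closure_of S \<longleftrightarrow>
     (\<forall>F. finite F \<and> F \<subseteq> topspace X \<longrightarrow> (\<exists>g\<in>S. \<forall>x\<in>F. g x = f x))"
proof -
  let ?Q = "Collect (quasicontinuous_map X D2)"
  have S': "S \<subseteq> topspace X \<rightarrow>\<^sub>E {0,1}" "?Q \<inter> S = S"
    using S unfolding topspace_Qp by blast+
  have f': "f \<in> topspace X \<rightarrow>\<^sub>E {0,1}" "f \<in> ?Q"
    using f unfolding topspace_Qp by auto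
  have "f \<in> Qp X closure_of S \<longleftrightarrow> f \<in> product_topology (\<lambda>_. D2) (topspace X) closure_of S"
    unfolding Qp_def closure_of_subtopology S'(2) using f'(2) by blast
  then show ?thesis
    unfolding D2_def in_closure_of_product_discrete_topology[OF S'(1) f'(1)] .
qed

lemma quasicontinuous_map_in_closure_of_interior_of:
  assumes g: "quasicontinuous_map X Y g" and V: "openin Y V" "g x \<in> V" and S: "openin X S" "x \<in> S"
  shows "x \<in> X closure_of (X interior_of {y \<in> S. g y \<in> V})"
  unfolding in_closure_of
proof (intro conjI allI impI)
  show x: "x \<in> topspace X"
    using S openin_subset by blast
  fix N assume N: "x \<in> N \<and> openin X N"
  have "openin X (N \<inter> S)" "x \<in> N \<inter> S"
    using N S by auto
  then obtain G where G: "openin X G" "G \<noteq> {}" "G \<subseteq> N \<inter> S" "g ` G \<subseteq> V"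
    using g x V unfolding quasicontinuous_map_def by blast
  then have "G \<subseteq> X interior_of {y \<in> S. g y \<in> V}"
    by (intro interior_of_maximal) auto
  then show "\<exists>y. y \<in> X interior_of {y \<in> S. g y \<in> V} \<and> y \<in> N"
    using G by blast
qed

(* For a map into a discrete space these are exactly its points of continuity. *)
definition local_constancy_set :: "'a topology \<Rightarrow> ('a \<Rightarrow> 'b) \<Rightarrow> 'a set" where
  "local_constancy_set X f = {x. x \<in> X interior_of {y \<in> topspace X. f y = f x}}"

lemma interior_of_fibre_subset_local_constancy_set:
  "X interior_of {y \<in> topspace X. f y = c} \<subseteq> local_constancy_set X f"
proof
  fix x assume x: "x \<in> X interior_of {y \<in> topspace X. f y = c}"
  then have "f x = c"
    using interior_of_subset by fastforce
  with x show "x \<in> local_constancy_set X f"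
    by (simp add: local_constancy_set_def)
qed

lemma openin_local_constancy_set: "openin X (local_constancy_set X f)"
proof (rule openin_subopen[THEN iffD2], intro ballI)
  fix x assume "x \<in> local_constancy_set X f"
  then have "x \<in> X interior_of {y \<in> topspace X. f y = f x}"
    by (simp add: local_constancy_set_def)
  then show "\<exists>T. openin X T \<and> x \<in> T \<and> T \<subseteq> local_constancy_set X f"
    using interior_of_fibre_subset_local_constancy_set[of X f "f x"]
    by (intro exI[of _ "X interior_of {y \<in> topspace X. f y = f x}"] conjI openin_interior_of)
qed

lemma closure_of_local_constancy_set:
  assumes f: "quasicontinuous_map X Y f" and "\<And>x. x \<in> topspace X \<Longrightarrow> openin Y {f x}"
  shows "X closure_of local_constancy_set X f = topspace X"
proof
  show "topspace X \<subseteq> X closure_of local_constancy_set X f"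
  proof
    fix x assume x: "x \<in> topspace X"
    have "x \<in> X closure_of (X interior_of {y \<in> topspace X. f y \<in> {f x}})"
      using quasicontinuous_map_in_closure_of_interior_of[OF f] assms(2) x by blast
    then show "x \<in> X closure_of local_constancy_set X f"
      using closure_of_mono[OF interior_of_fibre_subset_local_constancy_set] by fastforce
  qed
qed (rule closure_of_subset_topspace)

lemma closure_of_local_constancy_set_Qp:
  assumes "f \<in> topspace (Qp X)"
  shows "X closure_of local_constancy_set X f = topspace X"
proof (rule closure_of_local_constancy_set)
  show "quasicontinuous_map X D2 f"
    using assms by (simp add: topspace_Qp)
  show "openin D2 {f x}" if "x \<in> topspace X" for x
    using assms that by (auto simp: topspace_Qp PiE_iff)
qed

lemma K_Omega_iff:
  "\<U> \<in> K_Omega X \<longleftrightarrow>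
     (\<forall>U\<in>\<U>. openin X U \<and> X closure_of U \<noteq> topspace X) \<and>
     (\<forall>F. finite F \<and> F \<subseteq> topspace X \<longrightarrow> (\<exists>U\<in>\<U>. F \<subseteq> X closure_of U))"
    (is "_ \<longleftrightarrow> ?nondense \<and> ?fin")
proof
  assume "\<U> \<in> K_Omega X"
  then show "?nondense \<and> ?fin"
    unfolding K_Omega_def mem_Collect_eq ball_conj_distrib by (elim conjE) (intro conjI; assumption)
next
  assume R: "?nondense \<and> ?fin"
  have "topspace X \<subseteq> (\<Union>U\<in>\<U>. X closure_of U)"
  proof
    fix x assume "x \<in> topspace X"
    then obtain U where "U \<in> \<U>" "{x} \<subseteq> X closure_of U"
      using R by (metis empty_subsetI finite.emptyI finite.insertI insert_subset)
    then show "x \<in> (\<Union>U\<in>\<U>. X closure_of U)"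
      by blast
  qed
  then have "topspace X = (\<Union>U\<in>\<U>. X closure_of U)"
    by (simp add: UN_least closure_of_subset_topspace subset_antisym)
  with R show "\<U> \<in> K_Omega X"
    unfolding K_Omega_def by (intro CollectI conjI) simp_all
qed

lemma S_fin_tails:
  fixes A :: "nat \<Rightarrow> 'a set"
  assumes S: "S_fin \<A> \<B>" and A: "\<And>n. A n \<in> \<A>"
  obtains B where "\<And>n. finite (B n)" "\<And>n. B n \<subseteq> A n" "\<And>m. \<exists>C\<in>\<B>. C \<subseteq> (\<Union>n\<in>{m..}. B n)"
proof -
  have "\<exists>C. (\<forall>j. finite (C j) \<and> C j \<subseteq> A (prod_encode (m, j))) \<and> (\<Union>j. C j) \<in> \<B>" for m
    using S[unfolded S_fin_def, rule_format, of "\<lambda>j. A (prod_encode (m, j))"] A by simp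
  then obtain C where C: "\<And>m j. finite (C m j)" "\<And>m j. C m j \<subseteq> A (prod_encode (m, j))"
    "\<And>m. (\<Union>j. C m j) \<in> \<B>"
    by metis
  define B where "B n = C (fst (prod_decode n)) (snd (prod_decode n))" for n
  have B_encode: "B (prod_encode (m, j)) = C m j" for m j
    by (simp add: B_def)
  show thesis
  proof
    show "finite (B n)" "B n \<subseteq> A n" for n
      using C(1,2)[of "fst (prod_decode n)" "snd (prod_decode n)"] by (simp_all add: B_def)
    show "\<exists>C\<in>\<B>. C \<subseteq> (\<Union>n\<in>{m..}. B n)" for m
    proof
      show "(\<Union>j. C m j) \<subseteq> (\<Union>n\<in>{m..}. B n)"
        using le_prod_encode_1 B_encode by fastforce
    qed (rule C(3))
  qed
qed

lemma decseq_finite_eventually_disjoint: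
  assumes W: "decseq W" and F: "finite F" "F \<inter> \<Inter>(range W) = {}"
  obtains m where "\<And>n. m \<le> n \<Longrightarrow> F \<inter> W n = {}"
  using F
proof (induction F arbitrary: thesis rule: finite_induct)
  case empty
  then show ?case by blast
next
  case (insert a F)
  obtain m where m: "\<And>n. m \<le> n \<Longrightarrow> F \<inter> W n = {}"
    using insert by blast
  obtain k where "a \<notin> W k"
    using insert.prems(2) by blast
  then have "a \<notin> W n" if "k \<le> n" for n
    using W that by (auto simp: decseq_def)
  then show ?case
    using insert.prems(1)[of "max m k"] m by auto
qed

lemma (in Metric_space) closure_of_Union_converging_balls:
  assumes xM: "x \<in> M" and w: "\<And>k. d x (w k) < inverse (Suc k)" and s: "\<And>k. s k \<le> inverse (Suc k)"
  shows "mtopology closure_of (\<Union>k. mball (w k) (s k)) \<subseteq> insert x (\<Union>k. mcball (w k) (s k))"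
proof
  fix y assume y: "y \<in> mtopology closure_of (\<Union>k. mball (w k) (s k))"
  show "y \<in> insert x (\<Union>k. mcball (w k) (s k))"
  proof (rule ccontr)
    assume y_notin: "y \<notin> insert x (\<Union>k. mcball (w k) (s k))"
    have yM: "y \<in> M"
      using y closure_of_subset_topspace by fastforce
    define \<delta> where "\<delta> = d x y / 4"
    have "\<delta> > 0"
      using y_notin xM yM by (auto simp: \<delta>_def)
    then obtain K where K: "inverse (Suc K) < \<delta>"
      using reals_Archimedean by blast
    define N where "N = mball y \<delta> - (\<Union>k<K. mcball (w k) (s k))"
    have "openin mtopology N"
      unfolding N_def by (intro openin_diff openin_mball closedin_Union) auto
    moreover have "y \<in> N"
      using \<open>\<delta> > 0\<close> yM y_notin by (auto simp: N_def)
    ultimately obtain z k where z: "z \<in> mball (w k) (s k)" "z \<in> N"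
      using y unfolding in_closure_of by blast
    have "K \<le> k"
    proof (rule ccontr)
      assume "\<not> K \<le> k"
      then have "z \<in> (\<Union>k<K. mcball (w k) (s k))"
        using z(1) mball_subset_mcball by (force simp: not_le)
      then show False
        using z(2) by (simp add: N_def)
    qed
    then have "inverse (Suc k) \<le> inverse (Suc K)"
      by (simp add: le_imp_inverse_le)
    then have "inverse (Suc k) < \<delta>"
      using K by linarith
    then have "d x z < 2 * \<delta>"
      using z(1) w[of k] s[of k] triangle[of x "w k" z] xM by auto
    moreover have "d z y < \<delta>"
      using z(2) commute by (auto simp: N_def)
    ultimately show False
      using triangle[of x z y] xM yM z(1) nonneg[of x z] unfolding \<delta>_def by auto
  qed
qed

lemma (in Metric_space) exists_balls_converging_in_open:
  assumes P: "openin mtopology P" and x: "x \<in> mtopology closure_of P"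
  obtains w s where "\<And>k. w k \<in> P" "\<And>k. d x (w k) < inverse (Suc k)"
    "\<And>k. 0 < s k" "\<And>k. s k \<le> inverse (Suc k)" "\<And>k. mcball (w k) (s k) \<subseteq> P"
proof -
  have "\<exists>w s. w \<in> P \<and> d x w < inverse (Suc k) \<and> 0 < s \<and> s \<le> inverse (Suc k) \<and> mcball w s \<subseteq> P" for k
  proof -
    have "\<forall>r>0. \<exists>w\<in>P. w \<in> mball x r"
      using x by (simp add: metric_closure_of)
    then obtain w where w: "w \<in> P" "w \<in> mball x (inverse (Suc k))"
      by (meson inverse_positive_iff_positive of_nat_0_less_iff zero_less_Suc)
    obtain t where t: "t > 0" "mball w t \<subseteq> P"
      using P w(1) unfolding openin_mtopology by blast
    define s where "s = min (t/2) (inverse (Suc k))"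
    have "mcball w s \<subseteq> mball w t"
      using t(1) by (auto simp: s_def)
    then have "mcball w s \<subseteq> P"
      using t(2) by blast
    moreover have "0 < s" "s \<le> inverse (Suc k)"
      using t(1) by (auto simp: s_def)
    ultimately show ?thesis
      using w by (intro exI[of _ w] exI[of _ s]) simp
  qed
  then show thesis
    using that by metis
qed

lemma (in Metric_space) exists_open_subset_closure_of_insert:
  assumes P: "openin mtopology P" and x: "x \<in> mtopology closure_of P"
  obtains U where "openin mtopology U" "U \<subseteq> P" "x \<in> mtopology closure_of U"
    "mtopology closure_of U \<subseteq> insert x P"
proof -
  obtain w s where w: "\<And>k. w k \<in> P" "\<And>k. d x (w k) < inverse (Suc k)"
    and s: "\<And>k. 0 < s k" "\<And>k. s k \<le> inverse (Suc k)" "\<And>k. mcball (w k) (s k) \<subseteq> P"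
    using exists_balls_converging_in_open[OF P x] by blast
  have xM: "x \<in> M"
    using x closure_of_subset_topspace by fastforce
  have PM: "P \<subseteq> M"
    using P openin_subset by fastforce
  define U where "U = (\<Union>k. mball (w k) (s k))"
  show thesis
  proof
    show "openin mtopology U"
      unfolding U_def by blast
    show "U \<subseteq> P"
      unfolding U_def using s(3) mball_subset_mcball by blast
    show "x \<in> mtopology closure_of U"
      unfolding metric_closure_of
    proof (intro CollectI conjI allI impI xM)
      fix r :: real assume "r > 0"
      then obtain k where k: "inverse (Suc k) < r"
        using reals_Archimedean by blast
      have "w k \<in> U" "w k \<in> mball x r"
        using w[of k] s(1)[of k] xM k PM unfolding U_def by fastforce+
      then show "\<exists>y\<in>U. y \<in> mball x r" by blast
    qed
    show "mtopology closure_of U \<subseteq> insert x P"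
      using closure_of_Union_converging_balls[OF xM w(2) s(2)] s(3) unfolding U_def by blast
  qed
qed

lemma metrizable_exists_open_subset_closure_of_Un:
  assumes X: "metrizable_space X" and P: "openin X P" and F: "finite F" "F \<subseteq> X closure_of P"
  obtains U where "openin X U" "U \<subseteq> P" "F \<subseteq> X closure_of U" "X closure_of U \<subseteq> P \<union> F"
proof -
  obtain M d where "Metric_space M d" "X = Metric_space.mtopology M d"
    using X metrizable_space_def by blast
  then have "\<exists>V. openin X V \<and> V \<subseteq> P \<and> x \<in> X closure_of V \<and> X closure_of V \<subseteq> insert x P"
    if "x \<in> F" for x
    using Metric_space.exists_open_subset_closure_of_insert P F(2) that by (metis subsetD)
  then obtain V where V: "\<And>x. x \<in> F \<Longrightarrow> openin X (V x) \<and> V x \<subseteq> P \<and> x \<in> X closure_of (V x)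
      \<and> X closure_of (V x) \<subseteq> insert x P"
    by metis
  show thesis
  proof
    show "openin X (\<Union>(V ` F))" "\<Union>(V ` F) \<subseteq> P"
      using V by blast+
    have "X closure_of (\<Union>(V ` F)) = (\<Union>x\<in>F. X closure_of V x)"
      using F(1) by (simp add: closure_of_Union image_image)
    then show "F \<subseteq> X closure_of (\<Union>(V ` F))" "X closure_of (\<Union>(V ` F)) \<subseteq> P \<union> F"
      using V by blast+
  qed
qed

definition closure_indicator :: "'a topology \<Rightarrow> 'a set \<Rightarrow> 'a \<Rightarrow> nat" where
  "closure_indicator X U = restrict (\<lambda>x. if x \<in> X closure_of U then 1 else 0) (topspace X)"

lemma closure_indicator_in_Qp:
  assumes U: "openin X U"
  shows "closure_indicator X U \<in> topspace (Qp X)"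
proof -
  let ?\<chi> = "closure_indicator X U"
  have "\<exists>W. openin X W \<and> W \<noteq> {} \<and> W \<subseteq> N \<and> ?\<chi> ` W \<subseteq> V"
    if x: "x \<in> topspace X" and V: "?\<chi> x \<in> V" and N: "openin X N" "x \<in> N" for x V N
  proof (cases "x \<in> X closure_of U")
    case True
    then have "N \<inter> U \<noteq> {}"
      using N unfolding in_closure_of by blast
    moreover have "?\<chi> ` (N \<inter> U) \<subseteq> V"
      using x V True U closure_of_subset[OF openin_subset[OF U]] openin_subset[OF U]
      by (auto simp: closure_indicator_def)
    ultimately show ?thesis
      using N U by blast
  next
    case False
    have "openin X (N - X closure_of U)"
      using N by (simp add: openin_diff)
    moreover have "?\<chi> ` (N - X closure_of U) \<subseteq> V"
      using x V False openin_subset[OF N(1)] by (auto simp: closure_indicator_def)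
    ultimately show ?thesis
      using N False by blast
  qed
  then have "quasicontinuous_map X D2 ?\<chi>"
    unfolding quasicontinuous_map_def by (auto simp: closure_indicator_def)
  then show ?thesis
    by (auto simp: topspace_Qp closure_indicator_def)
qed

lemma closure_indicator_topspace_in_closure_of_iff:
  assumes "\<And>U. U \<in> \<U> \<Longrightarrow> openin X U"
  shows "closure_indicator X (topspace X) \<in> Qp X closure_of (closure_indicator X ` \<U>) \<longleftrightarrow>
         (\<forall>F. finite F \<and> F \<subseteq> topspace X \<longrightarrow> (\<exists>U\<in>\<U>. F \<subseteq> X closure_of U))"
proof -
  have "(\<forall>x\<in>F. closure_indicator X U x = closure_indicator X (topspace X) x) \<longleftrightarrow> F \<subseteq> X closure_of U"
    if "F \<subseteq> topspace X" for F U
    using that by (auto simp: closure_indicator_def)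
  moreover have "closure_indicator X ` \<U> \<subseteq> topspace (Qp X)"
    using assms closure_indicator_in_Qp by blast
  ultimately show ?thesis
    by (simp add: in_closure_of_Qp closure_indicator_in_Qp)
qed

lemma vet_omega_Qp_imp_S_fin_K_Omega:
  assumes vet: "vet_omega (Qp X)"
  shows "S_fin (K_Omega X) (K_Omega X)"
  unfolding S_fin_def
proof (intro allI impI)
  fix A :: "nat \<Rightarrow> 'a set set" assume A: "\<forall>n. A n \<in> K_Omega X"
  let ?\<chi> = "closure_indicator X" and ?one = "closure_indicator X (topspace X)"
  have A_open: "openin X U" "X closure_of U \<noteq> topspace X" if "U \<in> A n" for U n
    using A that by (auto simp: K_Omega_iff)
  have "?\<chi> ` A n \<subseteq> topspace (Qp X)" for n
    using A_open closure_indicator_in_Qp by blast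
  moreover have "?one \<in> Qp X closure_of (?\<chi> ` A n)" for n
    using A A_open by (simp add: closure_indicator_topspace_in_closure_of_iff K_Omega_iff)
  ultimately have "\<exists>K. (\<forall>n. finite (K n) \<and> K n \<subseteq> ?\<chi> ` A n) \<and> ?one \<in> Qp X closure_of (\<Union>n. K n)"
    using vet[unfolded vet_omega_def, rule_format, OF closure_indicator_in_Qp[OF openin_topspace],
        of "\<lambda>n. ?\<chi> ` A n"] by simp
  then obtain K where K: "\<And>n. finite (K n)" "\<And>n. K n \<subseteq> ?\<chi> ` A n"
    and one: "?one \<in> Qp X closure_of (\<Union>n. K n)"
    by blast
  obtain B where B: "\<And>n. B n \<subseteq> A n" "\<And>n. finite (B n)" "\<And>n. K n = ?\<chi> ` B n"
    using finite_subset_image[OF K(1) K(2)] by metis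
  have B_open: "openin X U" "X closure_of U \<noteq> topspace X" if "U \<in> (\<Union>n. B n)" for U
    using A_open B(1) that by blast+
  have "?one \<in> Qp X closure_of (?\<chi> ` (\<Union>n. B n))"
    using one by (simp add: B(3) image_UN)
  then have "\<forall>F. finite F \<and> F \<subseteq> topspace X \<longrightarrow> (\<exists>U\<in>(\<Union>n. B n). F \<subseteq> X closure_of U)"
    by (simp only: closure_indicator_topspace_in_closure_of_iff[OF B_open(1)])
  then have "(\<Union>n. B n) \<in> K_Omega X"
    unfolding K_Omega_iff using B_open by (intro conjI ballI) assumption+
  with B show "\<exists>B. (\<forall>n. finite (B n) \<and> B n \<subseteq> A n) \<and> (\<Union>n. B n) \<in> K_Omega X"
    by blast
qed

lemma in_closure_of_agreement_set:
  assumes f: "f \<in> topspace (Qp X)" and g: "g \<in> topspace (Qp X)"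
    and x: "x \<in> topspace X" "g x = f x"
    and W: "openin X W" "topspace X - local_constancy_set X f \<subseteq> W"
  shows "x \<in> X closure_of (X interior_of {y \<in> topspace X. g y = f y} \<union> (W \<inter> local_constancy_set X f))"
proof (cases "x \<in> local_constancy_set X f")
  case True
  let ?S = "X interior_of {y \<in> topspace X. f y = f x}"
  have "quasicontinuous_map X D2 g" "openin D2 {g x}"
    using g x(1) by (auto simp: topspace_Qp PiE_iff)
  then have "x \<in> X closure_of (X interior_of {y \<in> ?S. g y \<in> {g x}})"
    using True by (intro quasicontinuous_map_in_closure_of_interior_of) (auto simp: local_constancy_set_def)
  moreover have "{y \<in> ?S. g y \<in> {g x}} \<subseteq> {y \<in> topspace X. g y = f y}"
    using interior_of_subset[of X "{y \<in> topspace X. f y = f x}"] x(2) by auto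
  ultimately show ?thesis
    by (meson closure_of_mono interior_of_mono Un_upper1 subsetD)
next
  case False
  then have "x \<in> W \<inter> X closure_of local_constancy_set X f"
    using W(2) x(1) closure_of_local_constancy_set_Qp[OF f] by auto
  then have "x \<in> X closure_of (W \<inter> local_constancy_set X f)"
    using openin_Int_closure_of_subset[OF W(1)] by blast
  then show ?thesis
    by (meson closure_of_mono Un_upper2 subsetD)
qed

lemma metrizable_exists_nondense_open_agreeing:
  assumes X: "metrizable_space X"
    and f: "f \<in> topspace (Qp X)" and g: "g \<in> topspace (Qp X)" "g \<noteq> f"
    and F: "finite F" "F \<subseteq> topspace X" "\<forall>x\<in>F. g x = f x"
    and W: "openin X W" "topspace X - local_constancy_set X f \<subseteq> W"
  obtains U where "openin X U" "F \<subseteq> X closure_of U" "X closure_of U \<noteq> topspace X"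
    "\<forall>y\<in>X closure_of U. g y = f y \<or> y \<in> W \<inter> local_constancy_set X f"
proof -
  have "f \<in> topspace X \<rightarrow>\<^sub>E {0,1}" "g \<in> topspace X \<rightarrow>\<^sub>E {0,1}"
    using f g unfolding topspace_Qp by blast+
  then obtain p where p: "p \<in> topspace X" "g p \<noteq> f p"
    using PiE_ext g(2) by metis
  define Q where "Q = X interior_of {y \<in> topspace X. g y = f y} \<union> (W \<inter> local_constancy_set X f)"
  \<comment> \<open>Removing p, where g and f differ, is what keeps U from being dense.\<close>
  define P where "P = Q - {p}"
  have "closedin X {p}"
    using metrizable_imp_t1_space[OF X] p(1) by (simp add: t1_space_closedin_singleton)
  then have P_open: "openin X P"
    unfolding P_def Q_def
    by (intro openin_diff openin_Un openin_Int openin_interior_of openin_local_constancy_set W(1))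
  have "F \<subseteq> X closure_of P"
  proof
    fix x assume x: "x \<in> F"
    have "openin X (topspace X - {p})"
      using \<open>closedin X {p}\<close> by blast
    moreover have "x \<in> (topspace X - {p}) \<inter> X closure_of Q"
      using in_closure_of_agreement_set[OF f g(1) _ _ W] F p x unfolding Q_def by blast
    ultimately have "x \<in> X closure_of ((topspace X - {p}) \<inter> Q)"
      using openin_Int_closure_of_subset by blast
    then show "x \<in> X closure_of P"
      unfolding P_def by (rule closure_of_mono[THEN subsetD, rotated]) blast
  qed
  then obtain U where U: "openin X U" "F \<subseteq> X closure_of U" "X closure_of U \<subseteq> P \<union> F"
    by (rule metrizable_exists_open_subset_closure_of_Un[OF X P_open F(1)])
  show thesis
  proof
    show "X closure_of U \<noteq> topspace X"
      using U(3) p F(3) by (auto simp: P_def)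
    show "\<forall>y\<in>X closure_of U. g y = f y \<or> y \<in> W \<inter> local_constancy_set X f"
      using U(3) F(3) interior_of_subset[of X "{y \<in> topspace X. g y = f y}"]
      by (auto simp: P_def Q_def)
  qed (use U in auto)
qed

definition agreement_cover ::
    "'a topology \<Rightarrow> ('a \<Rightarrow> nat) \<Rightarrow> 'a set \<Rightarrow> ('a \<Rightarrow> nat) set \<Rightarrow> 'a set set" where
  "agreement_cover X f W A =
     {U. openin X U \<and> X closure_of U \<noteq> topspace X \<and>
         (\<exists>g\<in>A. \<forall>y\<in>X closure_of U. g y = f y \<or> y \<in> W \<inter> local_constancy_set X f)}"

lemma agreement_cover_in_K_Omega:
  assumes X: "metrizable_space X" and f: "f \<in> topspace (Qp X)"
    and A: "A \<subseteq> topspace (Qp X)" "f \<notin> A" "f \<in> Qp X closure_of A"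
    and W: "openin X W" "topspace X - local_constancy_set X f \<subseteq> W"
  shows "agreement_cover X f W A \<in> K_Omega X"
  unfolding K_Omega_iff
proof (intro conjI allI impI ballI)
  fix F assume F: "finite F \<and> F \<subseteq> topspace X"
  then obtain g where g: "g \<in> A" "\<forall>x\<in>F. g x = f x"
    using A(3) in_closure_of_Qp[OF A(1) f] by blast
  moreover have "g \<in> topspace (Qp X)" "g \<noteq> f"
    using g(1) A(1,2) by auto
  ultimately obtain U where "openin X U" "F \<subseteq> X closure_of U" "X closure_of U \<noteq> topspace X"
    "\<forall>y\<in>X closure_of U. g y = f y \<or> y \<in> W \<inter> local_constancy_set X f"
    using metrizable_exists_nondense_open_agreeing[OF X f _ _ _ _ _ W] F by metis
  with g(1) show "\<exists>U\<in>agreement_cover X f W A. F \<subseteq> X closure_of U"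
    unfolding agreement_cover_def by blast
qed (auto simp: agreement_cover_def)

lemma in_closure_of_agreement_selection:
  assumes f: "f \<in> topspace (Qp X)" and A: "\<And>n. A n \<subseteq> topspace (Qp X)"
    and W: "decseq W" "\<Inter>(range W) = topspace X - local_constancy_set X f"
    and S: "\<And>n. finite (S n)" "\<And>n. S n \<subseteq> agreement_cover X f (W n) (A n)"
    and tails: "\<And>m. \<exists>C\<in>K_Omega X. C \<subseteq> (\<Union>n\<in>{m..}. S n)"
  obtains K where "\<And>n. finite (K n)" "\<And>n. K n \<subseteq> A n" "f \<in> Qp X closure_of (\<Union>n. K n)"
proof -
  define L where "L = local_constancy_set X f"
  define sel where
    "sel n U = (SOME g. g \<in> A n \<and> (\<forall>y\<in>X closure_of U. g y = f y \<or> y \<in> W n \<inter> L))" for n U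
  have sel: "sel n U \<in> A n \<and> (\<forall>y\<in>X closure_of U. sel n U y = f y \<or> y \<in> W n \<inter> L)"
    if "U \<in> S n" for n U
  proof -
    have "\<exists>g. g \<in> A n \<and> (\<forall>y\<in>X closure_of U. g y = f y \<or> y \<in> W n \<inter> L)"
      using S(2)[of n] that unfolding agreement_cover_def L_def by blast
    then show ?thesis
      unfolding sel_def by (rule someI_ex)
  qed
  define K where "K n = sel n ` S n" for n
  have K: "finite (K n)" "K n \<subseteq> A n" for n
    using S(1) sel by (auto simp: K_def)
  have "f \<in> Qp X closure_of (\<Union>n. K n)"
    unfolding in_closure_of_Qp[OF UN_least[OF order_trans[OF K(2) A]] f]
  proof (intro allI impI)
    fix F assume F: "finite F \<and> F \<subseteq> topspace X"
    then have "finite (F \<inter> L)" "F \<inter> L \<inter> \<Inter>(range W) = {}"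
      using W(2) by (auto simp: L_def)
    then obtain m where m: "\<And>n. m \<le> n \<Longrightarrow> F \<inter> L \<inter> W n = {}"
      using decseq_finite_eventually_disjoint[OF W(1)] by blast
    obtain C where C: "C \<in> K_Omega X" "C \<subseteq> (\<Union>n\<in>{m..}. S n)"
      using tails by blast
    then have "\<exists>U\<in>C. F \<subseteq> X closure_of U"
      using F by (simp add: K_Omega_iff)
    then obtain U n where U: "U \<in> S n" "m \<le> n" "F \<subseteq> X closure_of U"
      using C(2) by blast
    then have "\<forall>x\<in>F. sel n U x = f x"
      using sel[OF U(1)] m[OF U(2)] by blast
    moreover have "sel n U \<in> K n"
      using U(1) by (simp add: K_def)
    ultimately show "\<exists>g\<in>\<Union>n. K n. \<forall>x\<in>F. g x = f x"
      by blast
  qed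
  with K that show thesis
    by blast
qed

lemma S_fin_K_Omega_imp_vet_omega_Qp:
  assumes X: "metrizable_space X" and Sfin: "S_fin (K_Omega X) (K_Omega X)"
  shows "vet_omega (Qp X)"
  unfolding vet_omega_def
proof (intro ballI allI impI)
  fix f and A :: "nat \<Rightarrow> ('a \<Rightarrow> nat) set"
  assume f: "f \<in> topspace (Qp X)" and "(\<forall>n. A n \<subseteq> topspace (Qp X)) \<and> (\<forall>n. f \<in> Qp X closure_of A n)"
  then have A: "\<And>n. A n \<subseteq> topspace (Qp X)" "\<And>n. f \<in> Qp X closure_of A n"
    by auto
  show "\<exists>K. (\<forall>n. finite (K n) \<and> K n \<subseteq> A n) \<and> f \<in> Qp X closure_of (\<Union>n. K n)"
  proof (cases "\<exists>n. f \<in> A n")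
    case True
    then obtain n0 where "f \<in> A n0"
      by blast
    moreover have "f \<in> Qp X closure_of (\<Union>n. if n = n0 then {f} else {})"
      using f closure_of_subset[of "{f}" "Qp X"] by simp
    ultimately show ?thesis
      by (intro exI[of _ "\<lambda>n. if n = n0 then {f} else {}"]) auto
  next
    case False
    have "closedin X (topspace X - local_constancy_set X f)"
      by (intro closedin_diff closedin_topspace openin_local_constancy_set)
    then obtain W where W: "\<And>n. openin X (W n)" "decseq W"
      "\<Inter>(range W) = topspace X - local_constancy_set X f"
      using closed_imp_gdelta_in[OF X] unfolding gdelta_in_descending decseq_Suc_iff by metis
    then have "topspace X - local_constancy_set X f \<subseteq> W n" for n
      by blast
    then have "agreement_cover X f (W n) (A n) \<in> K_Omega X" for n
      using agreement_cover_in_K_Omega[OF X f A(1) _ A(2) W(1)] False by blast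
    then obtain S where S: "\<And>n. finite (S n)" "\<And>n. S n \<subseteq> agreement_cover X f (W n) (A n)"
      and tails: "\<And>m. \<exists>C\<in>K_Omega X. C \<subseteq> (\<Union>n\<in>{m..}. S n)"
      by (rule S_fin_tails[OF Sfin, where A = "\<lambda>n. agreement_cover X f (W n) (A n)"]) blast
    show ?thesis
      by (rule in_closure_of_agreement_selection[OF f A(1) W(2,3) S tails]) blast
  qed
qed

theorem corollary4p4:
  fixes X :: "'a topology"
  assumes "metrizable_space X"
  shows "S_fin (K_Omega X) (K_Omega X) \<longleftrightarrow> vet_omega (Qp X)"
  using S_fin_K_Omega_imp_vet_omega_Qp[OF assms] vet_omega_Qp_imp_S_fin_K_Omega by blast

end
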